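(* Let $H$ be an abelian group with an alternating $\mathbb{Z}$-bilinear form $\langle-,-\rangle$, let $z\in\ker\mu$, and let $p\ge1$. There is a natural $\mathbb{Q}$-linear isomorphism \[ \mathbb{Q}\otimes_{\mathbb{Z}}\textstyle\bigwedge^{p-1}_{\mathbb{Z}}(H/\mathbb{Z}z)\longrightarrow \hat C_p(\mathbb{Q}[H])_{(z)}, \] given by $c\otimes(\bar u_1\wedge\cdots\wedge\bar u_{p-1})\mapsto c\,[u_1]\wedge\cdots\wedge[u_{p-1}]\wedge[z-u_1-\cdots-u_{p-1}]$ (classes modulo $\hat I_{p,(z)}$), with inverse induced by $[u_1]\wedge\cdots\wedge[u_p]\mapsto 1\otimes(\bar u_1\wedge\cdots\wedge\bar u_{p-1})$ for $u_1+\cdots+u_p=z$.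
   Context: $\mu:H\to\mathrm{Hom}_{\mathbb{Z}}(H,\mathbb{Z})$, $\mu(x)(y)=\langle x,y\rangle$. $\mathbb{Q}[H]$ is the $\mathbb{Q}$-vector space with basis symbols $[x]$, $x\in H$, with Lie bracket $[[x],[y]]=\langle x,y\rangle[x+y]$; $C_p(\mathbb{Q}[H])=\bigwedge^p_{\mathbb{Q}}\mathbb{Q}[H]$. For $p>0$ and $w\in H$, $C_p(\mathbb{Q}[H])_{(w)}$ is the subspace spanned by $[u_1]\wedge\cdots\wedge[u_p]$ with $u_1+\cdots+u_p=w$. Let $\hat I$ be the ideal of the exterior algebra $\bigwedge\mathbb{Q}[H]$ generated by all $[u+v]\wedge[x]-[u]\wedge[x+v]-[v]\wedge[x+u]$ with $u,v,x\in H$; $\hat I_{p,(w)}=\hat I\cap C_p(\mathbb{Q}[H])_{(w)}$ and $\hat C_p(\mathbb{Q}[H])_{(w)}=C_p(\mathbb{Q}[H])_{(w)}/\hat I_{p,(w)}$. $\bar u$ denotes the class of $u$ in $H/\mathbb{Z}z$. *)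

theory Defs
  imports Complex_Main "HOL-Library.Function_Algebras"
begin

definition zsmul :: "int \<Rightarrow> 'a::ab_group_add \<Rightarrow> 'a" where
  "zsmul k x = (if 0 \<le> k then (\<Sum>i<nat k. x) else - (\<Sum>i<nat (- k). x))"

definition zcoset :: "'a::ab_group_add \<Rightarrow> 'a \<Rightarrow> 'a set" where
  "zcoset z u = {u + zsmul k z | k. True}"

definition quotZ :: "'a::ab_group_add \<Rightarrow> 'a set set" where
  "quotZ z = range (zcoset z)"

definition cplus :: "'a::ab_group_add set \<Rightarrow> 'a set \<Rightarrow> 'a set" where
  "cplus A B = {a + b | a b. a \<in> A \<and> b \<in> B}"

text \<open>Formal Q-linear combinations of words (functions word \<Rightarrow> rat).\<close>
definition delta :: "'b \<Rightarrow> 'b \<Rightarrow> rat" where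
  "delta x = (\<lambda>y. if y = x then 1 else 0)"

definition qscale :: "rat \<Rightarrow> ('b \<Rightarrow> rat) \<Rightarrow> ('b \<Rightarrow> rat)" where
  "qscale c f = (\<lambda>x. c * f x)"

definition qspan :: "('b \<Rightarrow> rat) set \<Rightarrow> ('b \<Rightarrow> rat) set" where
  "qspan S = module.span qscale S"

definition qlinear_on :: "('b \<Rightarrow> rat) set \<Rightarrow> (('b \<Rightarrow> rat) \<Rightarrow> ('c \<Rightarrow> rat)) \<Rightarrow> bool" where
  "qlinear_on S f \<longleftrightarrow> (\<forall>x\<in>S. \<forall>y\<in>S. f (x + y) = f x + f y) \<and>
                      (\<forall>c. \<forall>x\<in>S. f (qscale c x) = qscale c (f x))"

text \<open>Words of length p in H span the degree-p tensor power of Q[H];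
  C_p(Q[H])_(w) is the image of the span of words of length p and weight w.
  The exterior algebra is the tensor algebra modulo the ideal generated by x\<otimes>x,
  whose degree-p part is spanned by alt_rels p; the preimage of the ideal I-hat in
  degree p is spanned by alt_rels p together with ihat_rels p.\<close>
definition C_gen :: "nat \<Rightarrow> 'a::ab_group_add \<Rightarrow> ('a list \<Rightarrow> rat) set" where
  "C_gen p w = qspan {delta us | us. length us = p \<and> sum_list us = w}"

definition alt_rels :: "nat \<Rightarrow> ('a::ab_group_add list \<Rightarrow> rat) set" where
  "alt_rels p =
     {delta (as @ [h, h] @ bs) | as h bs. length as + 2 + length bs = p} \<union>
     {delta (as @ [h, k] @ bs) + delta (as @ [k, h] @ bs) | as h k bs. length as + 2 + length bs = p}"

definition ihat_rels :: "nat \<Rightarrow> ('a::ab_group_add list \<Rightarrow> rat) set" where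
  "ihat_rels p =
     {delta (as @ [u + v, x] @ bs) - delta (as @ [u, x + v] @ bs) - delta (as @ [v, x + u] @ bs)
       | as u v x bs. length as + 2 + length bs = p}"

definition Ihat_lift :: "nat \<Rightarrow> 'a::ab_group_add \<Rightarrow> ('a list \<Rightarrow> rat) set" where
  "Ihat_lift p w = qspan (alt_rels p \<union> ihat_rels p) \<inter> C_gen p w"

text \<open>Source side: Q \<otimes>_Z \<Lambda>^n_Z (H/Zz), presented by generators (words of cosets of
  length n) and the Z-relations (additivity in each slot, vanishing on adjacent repeated
  entries); tensoring with Q gives the Q-span of generators modulo the Q-span of relations.\<close>
definition W_gen :: "'a::ab_group_add \<Rightarrow> nat \<Rightarrow> ('a set list \<Rightarrow> rat) set" where
  "W_gen z n = qspan {delta cs | cs. length cs = n \<and> set cs \<subseteq> quotZ z}"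

definition W_rels :: "'a::ab_group_add \<Rightarrow> nat \<Rightarrow> ('a set list \<Rightarrow> rat) set" where
  "W_rels z n = qspan
     ({delta (as @ [cplus A B] @ bs) - delta (as @ [A] @ bs) - delta (as @ [B] @ bs)
        | as A B bs. length as + 1 + length bs = n \<and> set (as @ [A, B] @ bs) \<subseteq> quotZ z} \<union>
      {delta (as @ [A, A] @ bs)
        | as A bs. length as + 2 + length bs = n \<and> set (as @ [A] @ bs) \<subseteq> quotZ z})"

end

(*
  \<Psi> sends a word u\<^sub>1 \<dots> u\<^sub>p of weight z to the coset word of its first p - 1 letters.
  It kills the generators of \<hat>I since the last letter is determined by the others, and the
  alternating relations since those on the first p - 1 letters hold in the exterior power.
  \<Phi> picks representatives u\<^sub>i and completes them by the letter z - \<Sigma> u\<^sub>i. Modulo \<hat>I the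
  completed word is additive in every slot (the relation of \<hat>I placed on the last two letters)
  and vanishes when z occupies a slot (transpose z with the completing letter), so it depends
  only on the cosets: \<Phi> is well defined, respects the relations of the exterior power, and
  \<Phi>, \<Psi> are mutually inverse on generators.
*)
theory Submission
  imports Defs
begin

interpretation Q: module qscale
  by unfold_locales (auto simp: qscale_def fun_eq_iff algebra_simps)

lemma qspan_eq_span: "qspan S = Q.span S"
  by (simp add: qspan_def)

lemma subspace_double_imp: assumes V: "Q.subspace V" and "x + x \<in> V" shows "x \<in> V"
proof -
  have "qscale (1/2) (x + x) \<in> V" using Q.subspace_scale[OF V assms(2)] .
  moreover have "qscale (1/2) (x + x) = x" by (simp add: qscale_def fun_eq_iff)
  ultimately show ?thesis by simp
qed

section \<open>Finitely supported functions and linear extension\<close>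

definition fin_supp :: "('b \<Rightarrow> rat) \<Rightarrow> bool" where
  "fin_supp f \<longleftrightarrow> finite {x. f x \<noteq> 0}"

lemma subspace_fin_supp: "Q.subspace {f. fin_supp f}"
proof (rule Q.subspaceI)
  fix x y :: "'b \<Rightarrow> rat" assume "x \<in> {f. fin_supp f}" "y \<in> {f. fin_supp f}"
  then have "finite ({a. x a \<noteq> 0} \<union> {a. y a \<noteq> 0})" by (simp add: fin_supp_def)
  moreover have "{a. (x + y) a \<noteq> 0} \<subseteq> {a. x a \<noteq> 0} \<union> {a. y a \<noteq> 0}" by auto
  ultimately show "x + y \<in> {f. fin_supp f}" by (auto simp: fin_supp_def intro: finite_subset)
qed (auto simp: fin_supp_def qscale_def elim: finite_subset[rotated])

lemma fin_supp_delta: "fin_supp (delta x)"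
  by (simp add: fin_supp_def delta_def)

lemma fin_supp_zero: "fin_supp 0"
  by (simp add: fin_supp_def)

lemma fin_supp_span: "(\<And>g. g \<in> R \<Longrightarrow> fin_supp g) \<Longrightarrow> x \<in> Q.span R \<Longrightarrow> fin_supp x"
  using Q.span_minimal[OF _ subspace_fin_supp, of R] by auto

text \<open>On functions of infinite support the sum is empty, so only finitely supported
  arguments are meaningful.\<close>
definition lin_ext :: "('b \<Rightarrow> ('c \<Rightarrow> rat)) \<Rightarrow> ('b \<Rightarrow> rat) \<Rightarrow> ('c \<Rightarrow> rat)" where
  "lin_ext F f = (\<Sum>x\<in>{x. f x \<noteq> 0}. qscale (f x) (F x))"

lemma lin_ext_eq_sum:
  assumes "finite U" "{x. f x \<noteq> 0} \<subseteq> U"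
  shows "lin_ext F f = (\<Sum>x\<in>U. qscale (f x) (F x))"
  unfolding lin_ext_def using assms
  by (intro sum.mono_neutral_left) (auto simp: qscale_def fun_eq_iff)

lemma lin_ext_add:
  assumes "fin_supp f" "fin_supp g"
  shows "lin_ext F (f + g) = lin_ext F f + lin_ext F g"
proof -
  let ?U = "{x. f x \<noteq> 0} \<union> {x. g x \<noteq> 0}"
  have U: "finite ?U" using assms by (simp add: fin_supp_def)
  have "lin_ext F (f + g) = (\<Sum>x\<in>?U. qscale ((f + g) x) (F x))"
    by (rule lin_ext_eq_sum[OF U]) auto
  also have "\<dots> = (\<Sum>x\<in>?U. qscale (f x) (F x)) + (\<Sum>x\<in>?U. qscale (g x) (F x))"
    by (simp add: sum.distrib[symmetric] Q.scale_left_distrib)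
  also have "\<dots> = lin_ext F f + lin_ext F g"
    by (simp add: lin_ext_eq_sum[OF U])
  finally show ?thesis .
qed

lemma lin_ext_scale: "lin_ext F (qscale c f) = qscale c (lin_ext F f)"
proof (cases "c = 0")
  case True
  then show ?thesis by (simp add: lin_ext_def qscale_def fun_eq_iff)
next
  case False
  then have "{x. qscale c f x \<noteq> 0} = {x. f x \<noteq> 0}" by (auto simp: qscale_def)
  then have "lin_ext F (qscale c f) = (\<Sum>x\<in>{x. f x \<noteq> 0}. qscale c (qscale (f x) (F x)))"
    unfolding lin_ext_def by (simp add: qscale_def mult.assoc)
  also have "\<dots> = qscale c (lin_ext F f)"
    unfolding lin_ext_def by (rule Q.scale_sum_right[symmetric])
  finally show ?thesis .
qed

lemma lin_ext_delta: "lin_ext F (delta x) = F x"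
proof -
  have "{y. delta x y \<noteq> 0} = {x}" by (auto simp: delta_def)
  then show ?thesis by (simp add: lin_ext_def delta_def qscale_def)
qed

lemma fin_supp_lin_ext: "(\<And>x. fin_supp (F x)) \<Longrightarrow> fin_supp (lin_ext F f)"
  unfolding lin_ext_def
  by (rule Q.subspace_sum[OF subspace_fin_supp, simplified])
     (use Q.subspace_scale[OF subspace_fin_supp] in auto)

definition fs_linear :: "(('b \<Rightarrow> rat) \<Rightarrow> ('c \<Rightarrow> rat)) \<Rightarrow> bool" where
  "fs_linear L \<longleftrightarrow>
     (\<forall>f g. fin_supp f \<longrightarrow> fin_supp g \<longrightarrow> L (f + g) = L f + L g) \<and>
     (\<forall>c f. fin_supp f \<longrightarrow> L (qscale c f) = qscale c (L f))"

lemma fs_linear_lin_ext: "fs_linear (lin_ext F)"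
  by (simp add: fs_linear_def lin_ext_add lin_ext_scale)

lemma fs_linear_add: "fs_linear L \<Longrightarrow> fin_supp f \<Longrightarrow> fin_supp g \<Longrightarrow> L (f + g) = L f + L g"
  unfolding fs_linear_def by blast

lemma fs_linear_diff:
  assumes "fs_linear L" "fin_supp f" "fin_supp g"
  shows "L (f - g) = L f - L g"
proof -
  have "fin_supp (f - g)" using assms(2,3) Q.subspace_diff[OF subspace_fin_supp] by auto
  then have "L ((f - g) + g) = L (f - g) + L g" using fs_linear_add assms(1,3) by blast
  then show ?thesis by (simp add: algebra_simps)
qed

lemma fs_linear_span_into:
  assumes L: "fs_linear L" and V: "Q.subspace V"
    and R: "\<And>g. g \<in> R \<Longrightarrow> fin_supp g \<and> L g \<in> V" and x: "x \<in> Q.span R"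
  shows "L x \<in> V"
proof -
  have "Q.subspace {x. fin_supp x \<and> L x \<in> V}"
    unfolding Q.subspace_def
  proof (intro conjI ballI allI)
    have "L 0 = qscale 0 (L 0)"
      using L Q.subspace_0[OF subspace_fin_supp] unfolding fs_linear_def
      by (metis Q.scale_zero_left mem_Collect_eq)
    then have "L 0 = 0" by (simp add: qscale_def fun_eq_iff)
    then show "0 \<in> {x. fin_supp x \<and> L x \<in> V}"
      using Q.subspace_0[OF subspace_fin_supp] Q.subspace_0[OF V] by simp
  next
    fix x y assume "x \<in> {x. fin_supp x \<and> L x \<in> V}" "y \<in> {x. fin_supp x \<and> L x \<in> V}"
    then show "x + y \<in> {x. fin_supp x \<and> L x \<in> V}"
      using L Q.subspace_add[OF subspace_fin_supp] Q.subspace_add[OF V]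
      by (auto simp: fs_linear_def)
  next
    fix c x assume "x \<in> {x. fin_supp x \<and> L x \<in> V}"
    then show "qscale c x \<in> {x. fin_supp x \<and> L x \<in> V}"
      using L Q.subspace_scale[OF subspace_fin_supp] Q.subspace_scale[OF V]
      by (auto simp: fs_linear_def)
  qed
  then have "Q.span R \<subseteq> {x. fin_supp x \<and> L x \<in> V}" using R by (intro Q.span_minimal) auto
  then show ?thesis using x by auto
qed

lemma fs_linear_comp_minus_id:
  assumes L1: "fs_linear L1" and L2: "fs_linear L2" and fs: "\<And>f. fin_supp (L1 f)"
  shows "fs_linear (\<lambda>x. L2 (L1 x) - x)"
  unfolding fs_linear_def
proof (intro conjI allI impI)
  fix f g :: "'a \<Rightarrow> rat" assume "fin_supp f" "fin_supp g"
  then show "L2 (L1 (f + g)) - (f + g) = L2 (L1 f) - f + (L2 (L1 g) - g)"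
    using fs_linear_add[OF L1] fs_linear_add[OF L2 fs fs] by (simp add: algebra_simps)
next
  fix c and f :: "'a \<Rightarrow> rat" assume "fin_supp f"
  then have "L2 (L1 (qscale c f)) = qscale c (L2 (L1 f))"
    using L1 L2 fs unfolding fs_linear_def by metis
  then show "L2 (L1 (qscale c f)) - qscale c f = qscale c (L2 (L1 f) - f)"
    by (simp add: qscale_def fun_eq_iff algebra_simps)
qed

lemma qlinear_on_if_fs_linear: "fs_linear L \<Longrightarrow> (\<And>x. x \<in> S \<Longrightarrow> fin_supp x) \<Longrightarrow> qlinear_on S L"
  unfolding fs_linear_def qlinear_on_def by auto

section \<open>Alternating and slot-additive word functions modulo a subspace\<close>

definition swap_closed :: "('e list \<Rightarrow> ('w \<Rightarrow> rat)) \<Rightarrow> ('w \<Rightarrow> rat) set \<Rightarrow> nat \<Rightarrow> bool" where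
  "swap_closed W V n \<longleftrightarrow>
     (\<forall>as h k bs. length as + 2 + length bs = n \<longrightarrow> W (as @ [h, k] @ bs) + W (as @ [k, h] @ bs) \<in> V)"

definition repeat_vanishing :: "('e list \<Rightarrow> ('w \<Rightarrow> rat)) \<Rightarrow> ('w \<Rightarrow> rat) set \<Rightarrow> nat \<Rightarrow> bool" where
  "repeat_vanishing W V n \<longleftrightarrow>
     (\<forall>P a Qs R. length P + 2 + length Qs + length R = n \<longrightarrow> W (P @ [a] @ Qs @ [a] @ R) \<in> V)"

definition slot_additive :: "('e::ab_group_add list \<Rightarrow> ('w \<Rightarrow> rat)) \<Rightarrow> ('w \<Rightarrow> rat) set \<Rightarrow> nat \<Rightarrow> bool" where
  "slot_additive W V n \<longleftrightarrow>
     (\<forall>xs a b ys. length xs + 1 + length ys = n \<longrightarrow>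
        W (xs @ [a + b] @ ys) - W (xs @ [a] @ ys) - W (xs @ [b] @ ys) \<in> V)"

lemma swap_closedD:
  "swap_closed W V n \<Longrightarrow> length as + 2 + length bs = n \<Longrightarrow> W (as @ [h, k] @ bs) + W (as @ [k, h] @ bs) \<in> V"
  unfolding swap_closed_def by blast

lemma repeat_vanishingD:
  "repeat_vanishing W V n \<Longrightarrow> length P + 2 + length Qs + length R = n \<Longrightarrow> W (P @ [a] @ Qs @ [a] @ R) \<in> V"
  unfolding repeat_vanishing_def by blast

lemma slot_additiveD:
  "slot_additive W V n \<Longrightarrow> length xs + 1 + length ys = n \<Longrightarrow>
    W (xs @ [a + b] @ ys) - W (xs @ [a] @ ys) - W (xs @ [b] @ ys) \<in> V"
  unfolding slot_additive_def by blast

lemma swap_closed_move: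
  assumes V: "Q.subspace V" and sw: "swap_closed W V n"
  shows "length P + 1 + length Qs + length R = n \<Longrightarrow>
    W (P @ [a] @ Qs @ R) - qscale ((-1) ^ length Qs) (W (P @ Qs @ [a] @ R)) \<in> V"
proof (induction Qs arbitrary: P)
  case Nil
  have "W (P @ [a] @ [] @ R) - qscale ((-1) ^ length []) (W (P @ [] @ [a] @ R)) = 0"
    by (simp add: qscale_def fun_eq_iff)
  then show ?case using Q.subspace_0[OF V] by metis
next
  case (Cons q Qs)
  define X where "X = W (P @ [a, q] @ (Qs @ R))"
  define Y where "Y = W (P @ [q, a] @ (Qs @ R))"
  define Z where "Z = W (P @ (q # Qs) @ [a] @ R)"
  define s :: rat where "s = (-1) ^ length Qs"
  have XY: "X + Y \<in> V"
    unfolding X_def Y_def by (rule swap_closedD[OF sw]) (use Cons.prems in simp)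
  have "W ((P @ [q]) @ [a] @ Qs @ R) - qscale s (W ((P @ [q]) @ Qs @ [a] @ R)) \<in> V"
    unfolding s_def by (rule Cons.IH) (use Cons.prems in simp)
  then have YZ: "Y - qscale s Z \<in> V" by (simp add: Y_def Z_def)
  have "X - qscale (-s) Z = (X + Y) - (Y - qscale s Z)" by (simp add: qscale_def fun_eq_iff)
  then have "X - qscale (-s) Z \<in> V" using Q.subspace_diff[OF V XY YZ] by simp
  moreover have "(-1::rat) ^ length (q # Qs) = -s" by (simp add: s_def)
  moreover have "P @ [a] @ (q # Qs) @ R = P @ [a, q] @ (Qs @ R)" by simp
  ultimately show ?case by (simp only: X_def Z_def)
qed

lemma swap_closed_transp:
  assumes V: "Q.subspace V" and sw: "swap_closed W V n"
    and len: "length P + 2 + length Qs + length R = n"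
  shows "W (P @ [a] @ Qs @ [b] @ R) + W (P @ [b] @ Qs @ [a] @ R) \<in> V"
proof -
  define s :: rat where "s = (-1) ^ length Qs"
  define A where "A = W ((P @ Qs) @ [a, b] @ R)"
  define B where "B = W ((P @ Qs) @ [b, a] @ R)"
  have mA: "W (P @ [a] @ Qs @ ([b] @ R)) - qscale s A \<in> V"
    using swap_closed_move[OF V sw, of P Qs "[b] @ R" a] len by (simp add: s_def A_def)
  have mB: "W (P @ [b] @ Qs @ ([a] @ R)) - qscale s B \<in> V"
    using swap_closed_move[OF V sw, of P Qs "[a] @ R" b] len by (simp add: s_def B_def)
  have AB: "A + B \<in> V"
    unfolding A_def B_def by (rule swap_closedD[OF sw]) (use len in simp)
  have "W (P @ [a] @ Qs @ [b] @ R) + W (P @ [b] @ Qs @ [a] @ R) =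
      (W (P @ [a] @ Qs @ ([b] @ R)) - qscale s A) + (W (P @ [b] @ Qs @ ([a] @ R)) - qscale s B)
      + qscale s (A + B)"
    by (simp add: qscale_def fun_eq_iff algebra_simps)
  also have "\<dots> \<in> V"
    by (intro Q.subspace_add[OF V] Q.subspace_scale[OF V] mA mB AB)
  finally show ?thesis .
qed

lemma swap_closed_repeat_vanishing:
  assumes V: "Q.subspace V" and sw: "swap_closed W V n"
  shows "repeat_vanishing W V n"
  unfolding repeat_vanishing_def
  using swap_closed_transp[OF V sw, where b = a for a] subspace_double_imp[OF V] by blast

lemma slot_additive_zero:
  assumes V: "Q.subspace V" and add: "slot_additive W V n"
    and len: "length xs + 1 + length ys = n"
  shows "W (xs @ [0] @ ys) \<in> V"
proof -
  have "W (xs @ [0 + 0] @ ys) - W (xs @ [0] @ ys) - W (xs @ [0] @ ys) \<in> V"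
    by (rule slot_additiveD[OF add len])
  then show ?thesis using Q.subspace_neg[OF V] by fastforce
qed

lemma slot_additive_minus_sum:
  assumes V: "Q.subspace V" and add: "slot_additive W V n" and rep: "repeat_vanishing W V n"
    and len: "length xs + 1 + length ys = n"
  shows "set L \<subseteq> set (xs @ ys) \<Longrightarrow> W (xs @ [- sum_list L] @ ys) \<in> V"
proof (induction L)
  case Nil
  then show ?case using slot_additive_zero[OF V add len] by simp
next
  case (Cons l L)
  let ?W = "\<lambda>t. W (xs @ [t] @ ys)"
  have l: "?W l \<in> V"
  proof (cases "l \<in> set xs")
    case True
    then obtain P R where "xs = P @ l # R" by (meson split_list)
    moreover have "W (P @ [l] @ R @ [l] @ ys) \<in> V"
      by (rule repeat_vanishingD[OF rep]) (use len \<open>xs = P @ l # R\<close> in simp)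
    ultimately show ?thesis by simp
  next
    case False
    then have "l \<in> set ys" using Cons.prems by auto
    then obtain P R where "ys = P @ l # R" by (meson split_list)
    moreover have "W (xs @ [l] @ P @ [l] @ R) \<in> V"
      by (rule repeat_vanishingD[OF rep]) (use len \<open>ys = P @ l # R\<close> in simp)
    ultimately show ?thesis by simp
  qed
  have "?W (- sum_list (l # L)) = (?W (-l + - sum_list L) - ?W (-l) - ?W (- sum_list L))
      - (?W (l + -l) - ?W l - ?W (-l)) + ?W 0 - ?W l + ?W (- sum_list L)"
    by (simp add: algebra_simps)
  also have "\<dots> \<in> V"
    using l Cons slot_additive_zero[OF V add len]
    by (intro Q.subspace_add[OF V] Q.subspace_diff[OF V] slot_additiveD[OF add len]) simp_all
  finally show ?case .
qed

text \<open>Expand \<open>W (\<dots> (a + b) (a + b) \<dots>) \<in> V\<close> in both slots.\<close>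
lemma slot_additive_swap_closed:
  fixes W :: "'e::ab_group_add list \<Rightarrow> ('w \<Rightarrow> rat)"
  assumes V: "Q.subspace V" and add: "slot_additive W V n"
    and alt: "\<And>as h bs. length as + 2 + length bs = n \<Longrightarrow> W (as @ [h, h] @ bs) \<in> V"
  shows "swap_closed W V n"
  unfolding swap_closed_def
proof (intro allI impI)
  fix as bs :: "'e list" and a b :: 'e
  assume len: "length as + 2 + length bs = n"
  have "W (as @ [a, b] @ bs) + W (as @ [b, a] @ bs) =
     W (as @ [a + b, a + b] @ bs)
     - (W (as @ [a + b] @ ((a + b) # bs)) - W (as @ [a] @ ((a + b) # bs)) - W (as @ [b] @ ((a + b) # bs)))
     - (W ((as @ [a]) @ [a + b] @ bs) - W ((as @ [a]) @ [a] @ bs) - W ((as @ [a]) @ [b] @ bs))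
     - (W ((as @ [b]) @ [a + b] @ bs) - W ((as @ [b]) @ [a] @ bs) - W ((as @ [b]) @ [b] @ bs))
     - W (as @ [a, a] @ bs) - W (as @ [b, b] @ bs)"
    by (simp add: algebra_simps)
  also have "\<dots> \<in> V"
    by (intro Q.subspace_diff[OF V] slot_additiveD[OF add] alt[OF len]) (use len in simp_all)
  finally show "W (as @ [a, b] @ bs) + W (as @ [b, a] @ bs) \<in> V" .
qed

lemma slot_additive_ihat_rel:
  assumes V: "Q.subspace V" and add: "slot_additive W V n" and sw: "swap_closed W V n"
    and len: "length as + 2 + length bs = n"
  shows "W (as @ [u + v, x] @ bs) - W (as @ [u, x + v] @ bs) - W (as @ [v, x + u] @ bs) \<in> V"
proof -
  have "W (as @ [u + v, x] @ bs) - W (as @ [u, x + v] @ bs) - W (as @ [v, x + u] @ bs) =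
     (W (as @ [u + v] @ (x # bs)) - W (as @ [u] @ (x # bs)) - W (as @ [v] @ (x # bs)))
     - (W ((as @ [u]) @ [x + v] @ bs) - W ((as @ [u]) @ [x] @ bs) - W ((as @ [u]) @ [v] @ bs))
     - (W ((as @ [v]) @ [x + u] @ bs) - W ((as @ [v]) @ [x] @ bs) - W ((as @ [v]) @ [u] @ bs))
     - (W (as @ [u, v] @ bs) + W (as @ [v, u] @ bs))"
    by (simp add: algebra_simps)
  also have "\<dots> \<in> V"
    by (intro Q.subspace_diff[OF V] slot_additiveD[OF add] swap_closedD[OF sw len]) (use len in simp_all)
  finally show ?thesis .
qed

section \<open>Cosets of \<open>\<int>z\<close>\<close>

lemma zsmul_0 [simp]: "zsmul 0 x = 0"
  by (simp add: zsmul_def)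

lemma zsmul_add_one: "zsmul (k + 1) x = zsmul k x + x"
proof (cases "k \<ge> 0")
  case True
  then have "nat (k + 1) = Suc (nat k)" by simp
  then show ?thesis using True by (simp add: zsmul_def)
next
  case False
  show ?thesis
  proof (cases "k = -1")
    case True
    then show ?thesis by (simp add: zsmul_def)
  next
    case k: False
    with \<open>\<not> k \<ge> 0\<close> have "nat (- k) = Suc (nat (- (k + 1)))" by simp
    then show ?thesis using \<open>\<not> k \<ge> 0\<close> k by (simp add: zsmul_def)
  qed
qed

lemma zsmul_diff_one: "zsmul (k - 1) x = zsmul k x - x"
  using zsmul_add_one[of "k - 1" x] by (simp add: algebra_simps)

lemma zsmul_add: "zsmul (k + l) x = zsmul k x + zsmul l x"
proof (induction l rule: int_induct[where k = 0])
  case base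
  then show ?case by simp
next
  case (step1 i)
  have "zsmul (k + (i + 1)) x = zsmul (k + i) x + x"
    using zsmul_add_one[of "k + i" x] by (simp add: add.assoc)
  also have "\<dots> = zsmul k x + (zsmul i x + x)" using step1(2) by (simp add: add.assoc)
  finally show ?case by (simp add: zsmul_add_one)
next
  case (step2 i)
  have "zsmul (k + (i - 1)) x = zsmul (k + i) x - x"
    using zsmul_diff_one[of "k + i" x] by (simp add: algebra_simps)
  also have "\<dots> = zsmul k x + (zsmul i x - x)" using step2(2) by (simp add: algebra_simps)
  finally show ?case by (simp add: zsmul_diff_one)
qed

lemma zcoset_self: "u \<in> zcoset z u"
  unfolding zcoset_def by (auto intro: exI[of _ 0])

lemma zcoset_in_quotZ [simp]: "zcoset z u \<in> quotZ z"
  by (simp add: quotZ_def)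

lemma zcoset_add_zsmul: "zcoset z (u + zsmul k z) = zcoset z u"
  unfolding zcoset_def
proof safe
  fix l
  show "\<exists>m. u + zsmul k z + zsmul l z = u + zsmul m z \<and> True"
    by (intro exI[of _ "k + l"]) (simp add: zsmul_add algebra_simps)
next
  fix l
  show "\<exists>m. u + zsmul l z = u + zsmul k z + zsmul m z \<and> True"
    using zsmul_add[of k "l - k" z] by (intro exI[of _ "l - k"]) (simp add: algebra_simps)
qed

lemma zcoset_eq_imp_zsmul: "zcoset z r = zcoset z u \<Longrightarrow> \<exists>k. r = u + zsmul k z"
  using zcoset_self[of r z] by (auto simp: zcoset_def)

lemma zcoset_diff_left: "zcoset z (z - s) = zcoset z (- s)"
  using zcoset_add_zsmul[of z "- s" 1] zsmul_add_one[of 0 z] by simp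

lemma cplus_zcoset: "cplus (zcoset z a) (zcoset z b) = zcoset z (a + b)"
proof (rule set_eqI, rule iffI)
  fix x assume "x \<in> cplus (zcoset z a) (zcoset z b)"
  then obtain k l where "x = a + zsmul k z + (b + zsmul l z)"
    by (auto simp: cplus_def zcoset_def)
  then have "x = a + b + zsmul (k + l) z" by (simp add: zsmul_add algebra_simps)
  then show "x \<in> zcoset z (a + b)" by (auto simp: zcoset_def)
next
  fix x assume "x \<in> zcoset z (a + b)"
  then obtain k where k: "x = (a + zsmul k z) + b" by (auto simp: zcoset_def algebra_simps)
  have "a + zsmul k z \<in> zcoset z a" by (auto simp: zcoset_def)
  then show "x \<in> cplus (zcoset z a) (zcoset z b)"
    unfolding cplus_def k using zcoset_self by blast
qed

definition rep :: "'a::ab_group_add \<Rightarrow> 'a set \<Rightarrow> 'a" where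
  "rep z A = (SOME u. A = zcoset z u)"

lemma zcoset_rep: "A \<in> quotZ z \<Longrightarrow> zcoset z (rep z A) = A"
  unfolding rep_def quotZ_def by (metis (mono_tags, lifting) imageE someI_ex)

lemma cplus_in_quotZ: "A \<in> quotZ z \<Longrightarrow> B \<in> quotZ z \<Longrightarrow> cplus A B \<in> quotZ z"
  by (metis cplus_zcoset zcoset_in_quotZ zcoset_rep)

section \<open>Words of weight \<open>z\<close> modulo \<open>\<hat>I\<close>\<close>

definition ihat_span :: "nat \<Rightarrow> ('a::ab_group_add list \<Rightarrow> rat) set" where
  "ihat_span p = Q.span (alt_rels p \<union> ihat_rels p)"

lemma subspace_ihat_span: "Q.subspace (ihat_span p)"
  by (simp add: ihat_span_def)

lemma C_gen_eq_span: "C_gen p w = Q.span {delta us | us. length us = p \<and> sum_list us = w}"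
  by (simp add: C_gen_def qspan_eq_span)

lemma Ihat_lift_eq: "Ihat_lift p w = ihat_span p \<inter> C_gen p w"
  by (simp add: Ihat_lift_def ihat_span_def qspan_eq_span)

lemma subspace_C_gen: "Q.subspace (C_gen p w)"
  by (simp add: C_gen_eq_span)

lemma subspace_Ihat_lift: "Q.subspace (Ihat_lift p w)"
  unfolding Ihat_lift_eq by (rule Q.subspace_inter[OF subspace_ihat_span subspace_C_gen])

lemma ihat_span_swap_closed: "swap_closed delta (ihat_span p) p"
  unfolding swap_closed_def ihat_span_def
  by (intro allI impI Q.span_base) (unfold alt_rels_def, blast)

lemma ihat_span_ihat_rel:
  "length as + 2 + length bs = p \<Longrightarrow>
    delta (as @ [u + v, x] @ bs) - delta (as @ [u, x + v] @ bs) - delta (as @ [v, x + u] @ bs) \<in> ihat_span p"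
  unfolding ihat_span_def by (rule Q.span_base) (unfold ihat_rels_def, blast)

definition completed_word :: "'a::ab_group_add \<Rightarrow> 'a list \<Rightarrow> ('a list \<Rightarrow> rat)" where
  "completed_word z us = delta (us @ [z - sum_list us])"

lemma completed_word_in_C_gen: "length us = n \<Longrightarrow> completed_word z us \<in> C_gen (Suc n) z"
  unfolding C_gen_eq_span completed_word_def by (rule Q.span_base) auto

text \<open>Moving the slot next to the completing letter \<open>c - t\<close> turns additivity in the slot into
  the defining relation of \<open>\<hat>I\<close> with \<open>x = c - a - b\<close>.\<close>
lemma completed_word_slot_additive:
  fixes z :: "'a::ab_group_add"
  shows "slot_additive (completed_word z) (ihat_span (Suc n)) n"
  unfolding slot_additive_def
proof (intro allI impI)
  fix xs ys :: "'a list" and a b :: 'a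
  assume len: "length xs + 1 + length ys = n"
  define c where "c = z - sum_list xs - sum_list ys"
  define s :: rat where "s = (-1) ^ length ys"
  define Y where "Y t = delta ((xs @ ys) @ [t, c - t] @ [])" for t
  let ?W = "\<lambda>t. completed_word z (xs @ [t] @ ys)"
  have move: "?W t - qscale s (Y t) \<in> ihat_span (Suc n)" for t
    using swap_closed_move[OF subspace_ihat_span ihat_span_swap_closed, of xs ys "[c - t]" "Suc n" t] len
    by (simp add: completed_word_def Y_def s_def c_def algebra_simps)
  have "delta ((xs @ ys) @ [a + b, c - (a + b)] @ []) - delta ((xs @ ys) @ [a, c - (a + b) + b] @ [])
      - delta ((xs @ ys) @ [b, c - (a + b) + a] @ []) \<in> ihat_span (Suc n)"
    by (rule ihat_span_ihat_rel) (use len in simp)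
  then have rel: "Y (a + b) - Y a - Y b \<in> ihat_span (Suc n)"
    by (simp add: Y_def algebra_simps)
  have "?W (a + b) - ?W a - ?W b =
     (?W (a + b) - qscale s (Y (a + b))) - (?W a - qscale s (Y a)) - (?W b - qscale s (Y b))
     + qscale s (Y (a + b) - Y a - Y b)"
    by (simp add: qscale_def fun_eq_iff algebra_simps)
  also have "\<dots> \<in> ihat_span (Suc n)"
    by (intro Q.subspace_add[OF subspace_ihat_span] Q.subspace_diff[OF subspace_ihat_span]
        Q.subspace_scale[OF subspace_ihat_span] move rel)
  finally show "?W (a + b) - ?W a - ?W b \<in> ihat_span (Suc n)" .
qed

lemma completed_word_repeat_vanishing:
  fixes z :: "'a::ab_group_add"
  shows "repeat_vanishing (completed_word z) (ihat_span (Suc n)) n"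
  unfolding repeat_vanishing_def
proof (intro allI impI)
  fix P Qs R :: "'a list" and a :: 'a
  assume len: "length P + 2 + length Qs + length R = n"
  let ?w = "z - sum_list (P @ [a] @ Qs @ [a] @ R)"
  have "delta (P @ [a] @ Qs @ [a] @ (R @ [?w])) \<in> ihat_span (Suc n)"
    by (rule repeat_vanishingD[OF swap_closed_repeat_vanishing[OF subspace_ihat_span ihat_span_swap_closed]])
      (use len in simp)
  then show "completed_word z (P @ [a] @ Qs @ [a] @ R) \<in> ihat_span (Suc n)"
    by (simp add: completed_word_def)
qed

text \<open>Transposing \<open>z\<close> with the completing letter \<open>w = - \<Sigma>(xs @ ys)\<close> leaves \<open>z\<close> as the
  completing letter of the word with \<open>w\<close> in the slot.\<close>
lemma completed_word_z_slot:
  assumes len: "length xs + 1 + length ys = n"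
  shows "completed_word z (xs @ [z] @ ys) \<in> ihat_span (Suc n)"
proof -
  define w where "w = - sum_list (xs @ ys)"
  have "delta (xs @ [z] @ ys @ [w] @ []) + delta (xs @ [w] @ ys @ [z] @ []) \<in> ihat_span (Suc n)"
    by (rule swap_closed_transp[OF subspace_ihat_span ihat_span_swap_closed]) (use len in simp)
  then have "completed_word z (xs @ [z] @ ys) + completed_word z (xs @ [w] @ ys) \<in> ihat_span (Suc n)"
    by (simp add: completed_word_def w_def algebra_simps)
  moreover have "completed_word z (xs @ [w] @ ys) \<in> ihat_span (Suc n)"
    unfolding w_def
    by (rule slot_additive_minus_sum[OF subspace_ihat_span completed_word_slot_additive
          completed_word_repeat_vanishing len]) simp
  ultimately show ?thesis
    using Q.subspace_diff[OF subspace_ihat_span] by fastforce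
qed

lemma completed_word_coset_slot:
  assumes len: "length xs + 1 + length ys = n" and eq: "zcoset z r = zcoset z u"
  shows "completed_word z (xs @ [r] @ ys) - completed_word z (xs @ [u] @ ys) \<in> ihat_span (Suc n)"
proof -
  let ?W = "\<lambda>t. completed_word z (xs @ [t] @ ys)"
  have step: "?W (t + z) - ?W t \<in> ihat_span (Suc n)" for t
  proof -
    have "?W (t + z) - ?W t = (?W (t + z) - ?W t - ?W z) + ?W z" by simp
    also have "\<dots> \<in> ihat_span (Suc n)"
      by (intro Q.subspace_add[OF subspace_ihat_span] completed_word_z_slot[OF len]
          slot_additiveD[OF completed_word_slot_additive len])
    finally show ?thesis .
  qed
  have "?W (u + zsmul k z) - ?W u \<in> ihat_span (Suc n)" for k
  proof (induction k rule: int_induct[where k = 0])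
    case base
    then show ?case using Q.subspace_0[OF subspace_ihat_span] by (simp add: zero_fun_def)
  next
    case (step1 i)
    have "?W (u + zsmul (i + 1) z) - ?W u = (?W ((u + zsmul i z) + z) - ?W (u + zsmul i z))
        + (?W (u + zsmul i z) - ?W u)"
      by (simp add: zsmul_add_one add.assoc)
    then show ?case using step step1(2) Q.subspace_add[OF subspace_ihat_span] by metis
  next
    case (step2 i)
    have "?W (u + zsmul (i - 1) z) - ?W u = (?W (u + zsmul i z) - ?W u)
        - (?W ((u + zsmul (i - 1) z) + z) - ?W (u + zsmul (i - 1) z))"
      by (simp add: zsmul_diff_one algebra_simps)
    then show ?case using step step2(2) Q.subspace_diff[OF subspace_ihat_span] by metis
  qed
  then show ?thesis using zcoset_eq_imp_zsmul[OF eq] by auto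
qed

lemma completed_word_cosets:
  assumes "list_all2 (\<lambda>r u. zcoset z r = zcoset z u) rs us"
  shows "length xs + length rs = n \<Longrightarrow>
    completed_word z (xs @ rs) - completed_word z (xs @ us) \<in> ihat_span (Suc n)"
  using assms
proof (induction rs us arbitrary: xs rule: list_all2_induct)
  case Nil
  then show ?case using Q.subspace_0[OF subspace_ihat_span] by (simp add: zero_fun_def)
next
  case (Cons r rs u us)
  have "completed_word z (xs @ [r] @ rs) - completed_word z (xs @ [u] @ rs) \<in> ihat_span (Suc n)"
    by (rule completed_word_coset_slot) (use Cons in simp_all)
  moreover have "completed_word z ((xs @ [u]) @ rs) - completed_word z ((xs @ [u]) @ us) \<in> ihat_span (Suc n)"
    by (rule Cons.IH) (use Cons in simp)
  ultimately have "(completed_word z (xs @ [r] @ rs) - completed_word z (xs @ [u] @ rs))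
      + (completed_word z ((xs @ [u]) @ rs) - completed_word z ((xs @ [u]) @ us)) \<in> ihat_span (Suc n)"
    by (rule Q.subspace_add[OF subspace_ihat_span])
  then show ?case by (simp add: fun_diff_def plus_fun_def)
qed

section \<open>Words of cosets modulo the relations of the exterior power\<close>

lemma W_gen_eq_span: "W_gen z n = Q.span {delta cs | cs. length cs = n \<and> set cs \<subseteq> quotZ z}"
  by (simp add: W_gen_def qspan_eq_span)

lemma W_rels_eq_span: "W_rels z n = Q.span
     ({delta (as @ [cplus A B] @ bs) - delta (as @ [A] @ bs) - delta (as @ [B] @ bs)
        | as A B bs. length as + 1 + length bs = n \<and> set (as @ [A, B] @ bs) \<subseteq> quotZ z} \<union>
      {delta (as @ [A, A] @ bs)
        | as A bs. length as + 2 + length bs = n \<and> set (as @ [A] @ bs) \<subseteq> quotZ z})"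
  by (simp add: W_rels_def qspan_eq_span)

lemma subspace_W_rels: "Q.subspace (W_rels z n)"
  by (simp add: W_rels_eq_span)

lemma W_rels_subset_W_gen: "W_rels z n \<subseteq> W_gen z n"
  unfolding W_rels_eq_span W_gen_eq_span
proof (rule Q.span_minimal[OF _ Q.subspace_span], rule subsetI, elim UnE CollectE exE conjE)
  fix x as A B bs
  assume x: "x = delta (as @ [cplus A B] @ bs) - delta (as @ [A] @ bs) - delta (as @ [B] @ bs)"
    and len: "length as + 1 + length bs = n" and set: "set (as @ [A, B] @ bs) \<subseteq> quotZ z"
  then have "cplus A B \<in> quotZ z" by (simp add: cplus_in_quotZ)
  then show "x \<in> Q.span {delta cs |cs. length cs = n \<and> set cs \<subseteq> quotZ z}"
    unfolding x using len set
    by (intro Q.span_diff Q.span_base CollectI exI[of _ "as @ [_] @ bs"]) auto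
next
  fix x as A bs
  assume "x = delta (as @ [A, A] @ bs)" "length as + 2 + length bs = n" "set (as @ [A] @ bs) \<subseteq> quotZ z"
  then show "x \<in> Q.span {delta cs |cs. length cs = n \<and> set cs \<subseteq> quotZ z}"
    by (intro Q.span_base CollectI exI[of _ "as @ [A, A] @ bs"]) auto
qed

definition coset_word :: "'a::ab_group_add \<Rightarrow> 'a list \<Rightarrow> ('a set list \<Rightarrow> rat)" where
  "coset_word z us = delta (map (zcoset z) us)"

lemma coset_word_slot_additive: "slot_additive (coset_word z) (W_rels z n) n"
  unfolding slot_additive_def
proof (intro allI impI)
  fix xs ys :: "'a list" and a b :: 'a
  assume len: "length xs + 1 + length ys = n"
  let ?as = "map (zcoset z) xs" and ?bs = "map (zcoset z) ys"
  have "length ?as + 1 + length ?bs = n \<and> set (?as @ [zcoset z a, zcoset z b] @ ?bs) \<subseteq> quotZ z"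
    using len by auto
  then have "delta (?as @ [cplus (zcoset z a) (zcoset z b)] @ ?bs) - delta (?as @ [zcoset z a] @ ?bs)
      - delta (?as @ [zcoset z b] @ ?bs) \<in> W_rels z n"
    unfolding W_rels_eq_span by (intro Q.span_base) blast
  then show "coset_word z (xs @ [a + b] @ ys) - coset_word z (xs @ [a] @ ys) - coset_word z (xs @ [b] @ ys)
      \<in> W_rels z n"
    by (simp add: coset_word_def cplus_zcoset)
qed

lemma coset_word_alt_rel:
  assumes len: "length as + 2 + length bs = n"
  shows "coset_word z (as @ [h, h] @ bs) \<in> W_rels z n"
proof -
  let ?as = "map (zcoset z) as" and ?bs = "map (zcoset z) bs"
  have "length ?as + 2 + length ?bs = n \<and> set (?as @ [zcoset z h] @ ?bs) \<subseteq> quotZ z"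
    using len by auto
  then have "delta (?as @ [zcoset z h, zcoset z h] @ ?bs) \<in> W_rels z n"
    unfolding W_rels_eq_span by (intro Q.span_base) blast
  then show ?thesis by (simp add: coset_word_def)
qed

lemma coset_word_swap_closed: "swap_closed (coset_word z) (W_rels z n) n"
  by (rule slot_additive_swap_closed[OF subspace_W_rels coset_word_slot_additive coset_word_alt_rel])

lemma coset_word_completed: "coset_word z (xs @ [z - sum_list xs]) \<in> W_rels z (Suc (length xs))"
proof -
  have "coset_word z (xs @ [- sum_list xs] @ []) \<in> W_rels z (Suc (length xs))"
    by (rule slot_additive_minus_sum[OF subspace_W_rels coset_word_slot_additive
          swap_closed_repeat_vanishing[OF subspace_W_rels coset_word_swap_closed]]) simp_all
  then show ?thesis by (simp add: coset_word_def zcoset_diff_left)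
qed

lemma coset_word_last_pair:
  assumes len: "length as + 1 = n" and hk: "h + k = z - sum_list as"
  shows "coset_word z (as @ [h]) + coset_word z (as @ [k]) \<in> W_rels z n"
proof -
  have "coset_word z (as @ [h]) + coset_word z (as @ [k]) =
      coset_word z (as @ [z - sum_list as])
      - (coset_word z (as @ [h + k] @ []) - coset_word z (as @ [h] @ []) - coset_word z (as @ [k] @ []))"
    by (simp add: hk)
  also have "\<dots> \<in> W_rels z n"
    using coset_word_completed[of z as] len
    by (intro Q.subspace_diff[OF subspace_W_rels] slot_additiveD[OF coset_word_slot_additive]) simp_all
  finally show ?thesis .
qed

definition truncated_coset_word :: "nat \<Rightarrow> 'a::ab_group_add \<Rightarrow> 'a list \<Rightarrow> ('a set list \<Rightarrow> rat)" where
  "truncated_coset_word n z w =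
     (if length w = Suc n \<and> sum_list w = z then coset_word z (take n w) else 0)"

lemma truncated_coset_word_swap:
  assumes len: "length as + 2 + length bs = Suc n"
  shows "truncated_coset_word n z (as @ [h, k] @ bs) + truncated_coset_word n z (as @ [k, h] @ bs)
    \<in> W_rels z n"
proof (cases "sum_list (as @ [h, k] @ bs) = z")
  case False
  then show ?thesis
    using Q.subspace_0[OF subspace_W_rels] by (simp add: truncated_coset_word_def algebra_simps)
next
  case True
  show ?thesis
  proof (cases bs rule: rev_exhaust)
    case Nil
    then have n: "n = Suc (length as)" using len by simp
    have "coset_word z (as @ [h]) + coset_word z (as @ [k]) \<in> W_rels z n"
      by (rule coset_word_last_pair) (use len True Nil in \<open>simp_all add: algebra_simps\<close>)
    then show ?thesis using True Nil by (simp add: truncated_coset_word_def n algebra_simps)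
  next
    case (snoc bs' b)
    then have n: "n = Suc (Suc (length as + length bs'))" using len by simp
    have "coset_word z (as @ [h, k] @ bs') + coset_word z (as @ [k, h] @ bs') \<in> W_rels z n"
      by (rule swap_closedD[OF coset_word_swap_closed]) (use len snoc in simp)
    then show ?thesis using True snoc by (simp add: truncated_coset_word_def n algebra_simps)
  qed
qed

lemma truncated_coset_word_alt_rel:
  "length as + 2 + length bs = Suc n \<Longrightarrow> truncated_coset_word n z (as @ [h, h] @ bs) \<in> W_rels z n"
  using truncated_coset_word_swap subspace_double_imp[OF subspace_W_rels] by blast

lemma truncated_coset_word_ihat_rel:
  assumes len: "length as + 2 + length bs = Suc n"
  shows "truncated_coset_word n z (as @ [u + v, x] @ bs) - truncated_coset_word n z (as @ [u, x + v] @ bs)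
    - truncated_coset_word n z (as @ [v, x + u] @ bs) \<in> W_rels z n"
proof (cases "sum_list (as @ [u + v, x] @ bs) = z")
  case False
  then show ?thesis
    using Q.subspace_0[OF subspace_W_rels] by (simp add: truncated_coset_word_def algebra_simps)
next
  case True
  show ?thesis
  proof (cases bs rule: rev_exhaust)
    case Nil
    then have n: "n = Suc (length as)" using len by simp
    have "coset_word z (as @ [u + v] @ []) - coset_word z (as @ [u] @ []) - coset_word z (as @ [v] @ [])
        \<in> W_rels z n"
      by (rule slot_additiveD[OF coset_word_slot_additive]) (use len Nil in simp)
    then show ?thesis using True Nil by (simp add: truncated_coset_word_def n algebra_simps)
  next
    case (snoc bs' b)
    then have n: "n = Suc (Suc (length as + length bs'))" using len by simp
    have "coset_word z (as @ [u + v, x] @ bs') - coset_word z (as @ [u, x + v] @ bs')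
        - coset_word z (as @ [v, x + u] @ bs') \<in> W_rels z n"
      by (rule slot_additive_ihat_rel[OF subspace_W_rels coset_word_slot_additive coset_word_swap_closed])
        (use len snoc in simp)
    then show ?thesis using True snoc by (simp add: truncated_coset_word_def n algebra_simps)
  qed
qed

section \<open>The mutually inverse maps\<close>

lemma fin_supp_add: "fin_supp f \<Longrightarrow> fin_supp g \<Longrightarrow> fin_supp (f + g)"
  using Q.subspace_add[OF subspace_fin_supp] by blast

lemma fin_supp_diff: "fin_supp f \<Longrightarrow> fin_supp g \<Longrightarrow> fin_supp (f - g)"
  using Q.subspace_diff[OF subspace_fin_supp] by blast

lemma fin_supp_W_gen: "x \<in> W_gen z n \<Longrightarrow> fin_supp x"
  unfolding W_gen_eq_span by (rule fin_supp_span) (auto simp: fin_supp_delta)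

lemma fin_supp_C_gen: "x \<in> C_gen p w \<Longrightarrow> fin_supp x"
  unfolding C_gen_eq_span by (rule fin_supp_span) (auto simp: fin_supp_delta)

definition Phi :: "'a::ab_group_add \<Rightarrow> ('a set list \<Rightarrow> rat) \<Rightarrow> ('a list \<Rightarrow> rat)" where
  "Phi z = lin_ext (\<lambda>cs. completed_word z (map (rep z) cs))"

definition Psi :: "nat \<Rightarrow> 'a::ab_group_add \<Rightarrow> ('a list \<Rightarrow> rat) \<Rightarrow> ('a set list \<Rightarrow> rat)" where
  "Psi n z = lin_ext (truncated_coset_word n z)"

lemma fs_linear_Phi: "fs_linear (Phi z)"
  by (simp add: Phi_def fs_linear_lin_ext)

lemma fs_linear_Psi: "fs_linear (Psi n z)"
  by (simp add: Psi_def fs_linear_lin_ext)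

lemma fin_supp_Phi: "fin_supp (Phi z f)"
  unfolding Phi_def by (rule fin_supp_lin_ext) (simp add: completed_word_def fin_supp_delta)

lemma fin_supp_Psi: "fin_supp (Psi n z f)"
  unfolding Psi_def truncated_coset_word_def
  by (rule fin_supp_lin_ext) (simp add: coset_word_def fin_supp_delta fin_supp_zero)

lemma Phi_delta: "Phi z (delta cs) = completed_word z (map (rep z) cs)"
  by (simp add: Phi_def lin_ext_delta)

lemma Psi_delta: "Psi n z (delta w) = truncated_coset_word n z w"
  by (simp add: Psi_def lin_ext_delta)

lemma Phi_W_gen: "Phi z ` W_gen z n \<subseteq> C_gen (Suc n) z"
proof (rule image_subsetI)
  fix x assume "x \<in> W_gen z n"
  then show "Phi z x \<in> C_gen (Suc n) z"
    unfolding W_gen_eq_span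
    by (rule fs_linear_span_into[OF fs_linear_Phi subspace_C_gen, rotated])
       (auto simp: fin_supp_delta Phi_delta intro!: completed_word_in_C_gen)
qed

lemma Phi_additivity_rel:
  assumes len: "length as + 1 + length bs = n" and set: "set (as @ [A, B] @ bs) \<subseteq> quotZ z"
  shows "Phi z (delta (as @ [cplus A B] @ bs) - delta (as @ [A] @ bs) - delta (as @ [B] @ bs))
    \<in> ihat_span (Suc n)"
proof -
  let ?W = "\<lambda>t. completed_word z (map (rep z) as @ [t] @ map (rep z) bs)"
  let ?a = "rep z A" and ?b = "rep z B"
  have len': "length (map (rep z) as) + 1 + length (map (rep z) bs) = n" using len by simp
  have "zcoset z (rep z (cplus A B)) = zcoset z (?a + ?b)"
    using set by (simp add: zcoset_rep cplus_in_quotZ flip: cplus_zcoset)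
  then have coset: "?W (rep z (cplus A B)) - ?W (?a + ?b) \<in> ihat_span (Suc n)"
    by (rule completed_word_coset_slot[OF len'])
  have "Phi z (delta (as @ [cplus A B] @ bs) - delta (as @ [A] @ bs) - delta (as @ [B] @ bs))
      = (?W (rep z (cplus A B)) - ?W (?a + ?b)) + (?W (?a + ?b) - ?W ?a - ?W ?b)"
    by (simp add: fs_linear_diff[OF fs_linear_Phi] fin_supp_delta fin_supp_diff Phi_delta)
  also have "\<dots> \<in> ihat_span (Suc n)"
    by (intro Q.subspace_add[OF subspace_ihat_span] coset
        slot_additiveD[OF completed_word_slot_additive len'])
  finally show ?thesis .
qed

lemma Phi_W_rels:
  fixes z :: "'a::ab_group_add"
  shows "Phi z ` W_rels z n \<subseteq> Ihat_lift (Suc n) z"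
proof (rule image_subsetI)
  fix x assume x: "x \<in> W_rels z n"
  have "Phi z x \<in> ihat_span (Suc n)"
    using x unfolding W_rels_eq_span
  proof (rule fs_linear_span_into[OF fs_linear_Phi subspace_ihat_span, rotated], elim UnE CollectE exE conjE)
    fix g :: "'a set list \<Rightarrow> rat" and as bs :: "'a set list" and A B
    assume g: "g = delta (as @ [cplus A B] @ bs) - delta (as @ [A] @ bs) - delta (as @ [B] @ bs)"
      and len: "length as + 1 + length bs = n" and set: "set (as @ [A, B] @ bs) \<subseteq> quotZ z"
    show "fin_supp g \<and> Phi z g \<in> ihat_span (Suc n)"
      unfolding g by (intro conjI fin_supp_diff fin_supp_delta Phi_additivity_rel[OF len set])
  next
    fix g :: "'a set list \<Rightarrow> rat" and as bs :: "'a set list" and A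
    assume g: "g = delta (as @ [A, A] @ bs)" and len: "length as + 2 + length bs = n"
    have "completed_word z (map (rep z) as @ [rep z A] @ [] @ [rep z A] @ map (rep z) bs)
        \<in> ihat_span (Suc n)"
      by (rule repeat_vanishingD[OF completed_word_repeat_vanishing]) (use len in simp)
    then show "fin_supp g \<and> Phi z g \<in> ihat_span (Suc n)"
      by (simp add: g fin_supp_delta Phi_delta)
  qed
  moreover have "Phi z x \<in> C_gen (Suc n) z"
    using Phi_W_gen W_rels_subset_W_gen x by blast
  ultimately show "Phi z x \<in> Ihat_lift (Suc n) z" by (simp add: Ihat_lift_eq)
qed

lemma Phi_coset_word:
  assumes len: "length us = n"
  shows "Phi z (delta (map (zcoset z) us)) - delta (us @ [z - sum_list us]) \<in> Ihat_lift (Suc n) z"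
proof -
  let ?rs = "map (rep z) (map (zcoset z) us)"
  have "list_all2 (\<lambda>r u. zcoset z r = zcoset z u) ?rs us"
    by (simp add: list_all2_map1 zcoset_rep list_all2_refl)
  then have "completed_word z ([] @ ?rs) - completed_word z ([] @ us) \<in> ihat_span (Suc n)"
    by (rule completed_word_cosets) (use len in simp)
  moreover have "completed_word z ?rs - completed_word z us \<in> C_gen (Suc n) z"
    using len by (intro Q.subspace_diff[OF subspace_C_gen] completed_word_in_C_gen) simp_all
  ultimately show ?thesis
    by (simp add: Ihat_lift_eq Phi_delta completed_word_def)
qed

lemma Psi_C_gen:
  fixes z :: "'a::ab_group_add"
  shows "Psi n z ` C_gen (Suc n) z \<subseteq> W_gen z n"
proof (rule image_subsetI)
  have V: "Q.subspace (W_gen z n)" by (simp add: W_gen_eq_span)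
  fix y assume "y \<in> C_gen (Suc n) z"
  then show "Psi n z y \<in> W_gen z n"
    unfolding C_gen_eq_span
  proof (rule fs_linear_span_into[OF fs_linear_Psi V, rotated], elim CollectE exE conjE)
    fix g :: "'a list \<Rightarrow> rat" and us assume "g = delta us" "length us = Suc n" "sum_list us = z"
    moreover have "delta (map (zcoset z) (take n us)) \<in> W_gen z n"
      unfolding W_gen_eq_span
      by (rule Q.span_base, rule CollectI, rule exI[of _ "map (zcoset z) (take n us)"])
         (use \<open>length us = Suc n\<close> in auto)
    ultimately show "fin_supp g \<and> Psi n z g \<in> W_gen z n"
      by (simp add: fin_supp_delta Psi_delta truncated_coset_word_def coset_word_def)
  qed
qed

lemma Psi_Ihat_lift:
  fixes z :: "'a::ab_group_add"
  shows "Psi n z ` Ihat_lift (Suc n) z \<subseteq> W_rels z n"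
proof (rule image_subsetI)
  fix y assume "y \<in> Ihat_lift (Suc n) z"
  then have "y \<in> Q.span (alt_rels (Suc n) \<union> ihat_rels (Suc n))"
    by (simp add: Ihat_lift_eq ihat_span_def)
  then show "Psi n z y \<in> W_rels z n"
  proof (rule fs_linear_span_into[OF fs_linear_Psi subspace_W_rels, rotated])
    fix g :: "'a list \<Rightarrow> rat" assume "g \<in> alt_rels (Suc n) \<union> ihat_rels (Suc n)"
    then show "fin_supp g \<and> Psi n z g \<in> W_rels z n"
      unfolding alt_rels_def ihat_rels_def
    proof (elim UnE CollectE exE conjE)
      fix as h bs assume g: "g = delta (as @ [h, h] @ bs)" and len: "length as + 2 + length bs = Suc n"
      show ?thesis
        using truncated_coset_word_alt_rel[OF len] by (simp add: g Psi_delta fin_supp_delta)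
    next
      fix as h k bs
      assume g: "g = delta (as @ [h, k] @ bs) + delta (as @ [k, h] @ bs)"
        and len: "length as + 2 + length bs = Suc n"
      show ?thesis
        using truncated_coset_word_swap[OF len]
        by (simp add: g Psi_delta fin_supp_delta fin_supp_add fs_linear_add[OF fs_linear_Psi])
    next
      fix as u v x bs
      assume g: "g = delta (as @ [u + v, x] @ bs) - delta (as @ [u, x + v] @ bs) - delta (as @ [v, x + u] @ bs)"
        and len: "length as + 2 + length bs = Suc n"
      show ?thesis
        using truncated_coset_word_ihat_rel[OF len]
        by (simp add: g Psi_delta fin_supp_delta fin_supp_diff fs_linear_diff[OF fs_linear_Psi])
    qed
  qed
qed

lemma Psi_Phi:
  fixes z :: "'a::ab_group_add"
  assumes x: "x \<in> W_gen z n"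
  shows "Psi n z (Phi z x) - x \<in> W_rels z n"
  using x unfolding W_gen_eq_span
proof (rule fs_linear_span_into[OF fs_linear_comp_minus_id[OF fs_linear_Phi fs_linear_Psi fin_supp_Phi]
      subspace_W_rels, rotated], elim CollectE exE conjE)
  fix g :: "'a set list \<Rightarrow> rat" and cs assume g: "g = delta cs" and len: "length cs = n" and set: "set cs \<subseteq> quotZ z"
  have "map (zcoset z) (map (rep z) cs) = cs"
    using set by (induction cs) (auto simp: zcoset_rep)
  then have "Psi n z (Phi z g) = g"
    using len by (simp add: g Phi_delta Psi_delta completed_word_def truncated_coset_word_def coset_word_def)
  then show "fin_supp g \<and> Psi n z (Phi z g) - g \<in> W_rels z n"
    using Q.subspace_0[OF subspace_W_rels] by (simp add: g fin_supp_delta)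
qed

lemma Phi_Psi:
  fixes z :: "'a::ab_group_add"
  assumes y: "y \<in> C_gen (Suc n) z"
  shows "Phi z (Psi n z y) - y \<in> Ihat_lift (Suc n) z"
  using y unfolding C_gen_eq_span
proof (rule fs_linear_span_into[OF fs_linear_comp_minus_id[OF fs_linear_Psi fs_linear_Phi fin_supp_Psi]
      subspace_Ihat_lift, rotated], elim CollectE exE conjE)
  fix g :: "'a list \<Rightarrow> rat" and us assume g: "g = delta us" and len: "length us = Suc n" and sum: "sum_list us = z"
  define vs where "vs = take n us"
  have us: "us = vs @ [z - sum_list vs]"
  proof -
    obtain vs' b where "us = vs' @ [b]" using len by (cases us rule: rev_exhaust) auto
    then show ?thesis using len sum by (simp add: vs_def algebra_simps)
  qed
  have "Phi z (Psi n z g) - g = Phi z (delta (map (zcoset z) vs)) - delta us"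
    using len sum by (simp add: g Psi_delta truncated_coset_word_def coset_word_def vs_def)
  also have "\<dots> = Phi z (delta (map (zcoset z) vs)) - delta (vs @ [z - sum_list vs])"
    using us by simp
  also have "\<dots> \<in> Ihat_lift (Suc n) z"
    by (rule Phi_coset_word) (use len in \<open>simp add: vs_def\<close>)
  finally show "fin_supp g \<and> Phi z (Psi n z g) - g \<in> Ihat_lift (Suc n) z"
    by (simp add: g fin_supp_delta)
qed

theorem proposition3p2:
  fixes form :: "'a::ab_group_add \<Rightarrow> 'a \<Rightarrow> int" and z :: 'a and p :: nat
  assumes bilin_l: "\<forall>x x' y. form (x + x') y = form x y + form x' y"
    and bilin_r: "\<forall>x y y'. form x (y + y') = form x y + form x y'"
    and alternating: "\<forall>x. form x x = 0"
    and z_ker: "\<forall>y. form z y = 0"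
    and p_pos: "p \<ge> 1"
  shows "\<exists>\<Phi> \<Psi>.
     qlinear_on (W_gen z (p - 1)) \<Phi> \<and>
     \<Phi> ` W_gen z (p - 1) \<subseteq> C_gen p z \<and>
     \<Phi> ` W_rels z (p - 1) \<subseteq> Ihat_lift p z \<and>
     (\<forall>us. length us = p - 1 \<longrightarrow>
        \<Phi> (delta (map (zcoset z) us)) - delta (us @ [z - sum_list us]) \<in> Ihat_lift p z) \<and>
     qlinear_on (C_gen p z) \<Psi> \<and>
     \<Psi> ` C_gen p z \<subseteq> W_gen z (p - 1) \<and>
     \<Psi> ` Ihat_lift p z \<subseteq> W_rels z (p - 1) \<and>
     (\<forall>us. length us = p \<and> sum_list us = z \<longrightarrow>
        \<Psi> (delta us) = delta (map (zcoset z) (take (p - 1) us))) \<and>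
     (\<forall>x\<in>W_gen z (p - 1). \<Psi> (\<Phi> x) - x \<in> W_rels z (p - 1)) \<and>
     (\<forall>y\<in>C_gen p z. \<Phi> (\<Psi> y) - y \<in> Ihat_lift p z)"
proof -
  obtain n where p: "p = Suc n" using p_pos by (cases p) auto
  show ?thesis
    unfolding p diff_Suc_1
  proof (intro exI[of _ "Phi z"] exI[of _ "Psi n z"] conjI allI impI ballI)
    show "qlinear_on (W_gen z n) (Phi z)"
      by (rule qlinear_on_if_fs_linear[OF fs_linear_Phi fin_supp_W_gen])
    show "qlinear_on (C_gen (Suc n) z) (Psi n z)"
      by (rule qlinear_on_if_fs_linear[OF fs_linear_Psi fin_supp_C_gen])
    show "Psi n z (delta us) = delta (map (zcoset z) (take n us))"
      if "length us = Suc n \<and> sum_list us = z" for us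
      using that by (simp add: Psi_delta truncated_coset_word_def coset_word_def)
  qed (simp_all add: Phi_W_gen Phi_W_rels Phi_coset_word Psi_C_gen Psi_Ihat_lift Psi_Phi Phi_Psi)
qed

end
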